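(* Let $M$ be a nontrivial monoid in $\mathcal{C}$ and let $V=\mathbb{R}\otimes_\mathbb{Z}\mathrm{gp}(M)$. The following are equivalent: (a) $M$ is an HFM; (b) every face submonoid of $M$ is an HFM; (c) $\dim\mathsf{conv}_V(\mathcal{A}(M))<\dim\mathsf{cone}_V(M)$.
   Context: Convention: all monoids are commutative, cancellative, and reduced, written additively; $M^\bullet=M\setminus\{0\}$; atoms $\mathcal{A}(M)=M^\bullet\setminus(M^\bullet+M^\bullet)$. $\mathcal{C}$ is the class of monoids isomorphic to a submonoid of a free commutative monoid of finite rank (equivalently, of $(\mathbb{N}^d,+)$). $M$ is regarded as a submonoid of $V=\mathbb{R}\otimes_\mathbb{Z}\mathrm{gp}(M)$; $\mathsf{cone}_V(M)$ is the set of finite nonnegative linear combinations of elements of $M$ and $\mathsf{conv}_V$ denotes convex hull; dimensions are dimensions of affine hulls. A face of a cone $C$ is a cone $F\subseteq C$ such that whenever $x,y\in C$ and $F$ meets the open segment between $x$ and $y$, then $x,y\in F$; a face submonoid of $M$ is $M\cap F$ for a face $F$ of $\mathsf{cone}_V(M)$. A factorization of $x\in M$ is a formal sum (multiset) of atoms summing to $x$; its length is the number of atoms counted with multiplicity. $M$ is an HFM (half-factorial monoid) if every element is a sum of atoms and any two factorizations of the same nonzero element have the same length. *)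

theory Defs
  imports "HOL-Analysis.Analysis" "HOL-Library.Multiset"
begin

text \<open>Members of the class C are represented (up to isomorphism)
as submonoids of nat^'n, 'n a finite index type (free commutative monoid of
finite rank).\<close>

definition submonoid :: "'a::comm_monoid_add set \<Rightarrow> bool" where
  "submonoid M \<longleftrightarrow> 0 \<in> M \<and> (\<forall>x\<in>M. \<forall>y\<in>M. x + y \<in> M)"

definition atoms :: "'a::comm_monoid_add set \<Rightarrow> 'a set" where
  "atoms M = {a \<in> M - {0}. \<not> (\<exists>x\<in>M - {0}. \<exists>y\<in>M - {0}. a = x + y)}"

definition factorization :: "'a::comm_monoid_add set \<Rightarrow> 'a \<Rightarrow> 'a multiset \<Rightarrow> bool" where
  "factorization M x F \<longleftrightarrow> set_mset F \<subseteq> atoms M \<and> sum_mset F = x"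

definition HFM :: "'a::comm_monoid_add set \<Rightarrow> bool" where
  "HFM M \<longleftrightarrow> (\<forall>x\<in>M. \<exists>F. factorization M x F) \<and>
     (\<forall>x\<in>M - {0}. \<forall>F G. factorization M x F \<longrightarrow> factorization M x G \<longrightarrow> size F = size G)"

text \<open>The canonical embedding nat^'n into real^'n; R tensor gp(M) is identified
with the real span of the image of M.\<close>
definition emb :: "nat ^ 'n \<Rightarrow> real ^ 'n" where
  "emb x = (\<chi> i. real (x $ i))"

definition cone_of :: "('b::real_vector) set \<Rightarrow> 'b set" where
  "cone_of S = {y. \<exists>T c. finite T \<and> T \<subseteq> S \<and> (\<forall>x\<in>T. c x \<ge> 0) \<and> y = (\<Sum>x\<in>T. c x *\<^sub>R x)}"

definition cone_face :: "('b::real_vector) set \<Rightarrow> 'b set \<Rightarrow> bool" where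
  "cone_face F C \<longleftrightarrow> F \<noteq> {} \<and> cone F \<and> F face_of C"

definition face_submonoid :: "(nat ^ 'n) set \<Rightarrow> (nat ^ 'n) set \<Rightarrow> bool" where
  "face_submonoid N M \<longleftrightarrow> (\<exists>F. cone_face F (cone_of (emb ` M)) \<and> N = {x \<in> M. emb x \<in> F})"

end

theory Submission
  imports Defs
begin

text \<open>
  Two factorizations of one element with different lengths give, after subtracting their
  multiplicity vectors and normalising, an affine combination of atoms equal to 0.  Conversely,
  a real affine relation among finitely many atoms is turned into a rational one by a
  \<open>\<rat>\<close>-linear functional \<open>\<real> \<rightarrow> \<rat>\<close> fixing 1, then into an integral one by clearing
  denominators; its positive and negative parts are two factorizations of one element with
  different lengths.  Hence M is half-factorial iff 0 is not in the affine hull of the atoms,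
  i.e. iff adjoining 0 to the atoms raises the affine dimension; as the atoms span the cone,
  that dimension is the dimension of the cone.  A face of the cone cuts out a divisor-closed
  submonoid, whose atoms are atoms of M, and M is its own face submonoid.
\<close>

lemma multiset_eq_sum_replicate_count:
  assumes "finite T" and "set_mset F \<subseteq> T"
  shows "F = (\<Sum>a\<in>T. replicate_mset (count F a) a)"
  using assms by (intro multiset_eqI) (auto simp: count_sum count_eq_zero_iff)

lemma size_eq_sum_count:
  assumes "finite T" and "set_mset F \<subseteq> T"
  shows "size F = (\<Sum>a\<in>T. count F a)"
  by (subst multiset_eq_sum_replicate_count[OF assms]) simp

lemma sum_mset_sum: "sum_mset (\<Sum>i\<in>I. F i) = (\<Sum>i\<in>I. sum_mset (F i))"
  by (induction I rule: infinite_finite_induct) simp_all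

lemma sum_mset_replicate_mset_scaleR:
  "sum_mset (replicate_mset n a) = real n *\<^sub>R (a :: 'a::real_vector)"
  by (induction n) (simp_all add: algebra_simps)

lemma sum_mset_eq_sum_count:
  fixes F :: "'a::real_vector multiset"
  assumes "finite T" and "set_mset F \<subseteq> T"
  shows "sum_mset F = (\<Sum>a\<in>T. real (count F a) *\<^sub>R a)"
  by (subst multiset_eq_sum_replicate_count[OF assms])
     (simp add: sum_mset_sum sum_mset_replicate_mset_scaleR)

lemma sum_mset_in_span: "set_mset F \<subseteq> span S \<Longrightarrow> sum_mset F \<in> span S"
  by (induction F) (simp_all add: span_zero span_add)

lemma emb_add: "emb (x + y) = emb x + emb y"
  by (simp add: emb_def vec_eq_iff)

lemma emb_0 [simp]: "emb 0 = 0"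
  by (simp add: emb_def vec_eq_iff)

lemma inj_emb: "inj emb"
  by (auto simp: inj_def emb_def vec_eq_iff)

lemma emb_sum_mset: "emb (sum_mset F) = sum_mset (image_mset emb F)"
  by (induction F) (simp_all add: emb_add)

lemma vec_nat_add_eq_0_iff: "(a :: nat ^ 'n) + b = 0 \<longleftrightarrow> a = 0 \<and> b = 0"
  by (auto simp: vec_eq_iff)

lemma sum_mset_vec_nat_eq_0_iff: "(sum_mset F :: nat ^ 'n) = 0 \<longleftrightarrow> (\<forall>x\<in>#F. x = 0)"
  by (induction F) (simp_all add: vec_nat_add_eq_0_iff)

lemma sum_components_pos:
  assumes "(x :: nat ^ 'n) \<noteq> 0"
  shows "0 < (\<Sum>i\<in>UNIV. x $ i)"
proof -
  obtain i where "x $ i \<noteq> 0"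
    using assms by (auto simp: vec_eq_iff)
  moreover have "x $ i \<le> (\<Sum>i\<in>UNIV. x $ i)"
    by (rule member_le_sum) simp_all
  ultimately show ?thesis by simp
qed

lemma atoms_subset: "atoms M \<subseteq> M"
  by (auto simp: atoms_def)

lemma sum_mset_in_submonoid:
  assumes "submonoid M" and "set_mset F \<subseteq> M"
  shows "sum_mset F \<in> M"
  using assms by (induction F) (auto simp: submonoid_def)

lemma HFM_size_eq:
  assumes "HFM M" and "x \<in> M" and "x \<noteq> 0"
    and "factorization M x F" and "factorization M x G"
  shows "size F = size G"
  using assms unfolding HFM_def by blast

lemma ex_factorization:
  fixes M :: "(nat ^ 'n) set"
  assumes "submonoid M" and "x \<in> M"
  shows "\<exists>F. factorization M x F"
  using assms(2)
proof (induction "\<Sum>i\<in>UNIV. x $ i" arbitrary: x rule: less_induct)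
  case less
  consider "x = 0" | "x \<in> atoms M" | y z where "y \<in> M - {0}" "z \<in> M - {0}" "x = y + z"
    using less.prems by (auto simp: atoms_def)
  then show ?case
  proof cases
    case 1
    then have "factorization M x {#}" by (simp add: factorization_def)
    then show ?thesis ..
  next
    case 2
    then have "factorization M x {#x#}" by (simp add: factorization_def)
    then show ?thesis ..
  next
    case 3
    then have "(\<Sum>i\<in>UNIV. y $ i) < (\<Sum>i\<in>UNIV. x $ i)" "(\<Sum>i\<in>UNIV. z $ i) < (\<Sum>i\<in>UNIV. x $ i)"
      using sum_components_pos[of y] sum_components_pos[of z] by (auto simp: sum.distrib)
    then obtain F G where "factorization M y F" "factorization M z G"
      using less.hyps 3 by blast
    then have "factorization M x (F + G)"
      using 3 by (auto simp: factorization_def)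
    then show ?thesis ..
  qed
qed

section \<open>Half-factoriality and affine relations among atoms\<close>

lemma zero_in_affine_hull_if_sum_mset_eq:
  fixes F G :: "'a::real_vector multiset"
  assumes sum: "sum_mset F = sum_mset G" and size: "size F \<noteq> size G"
  shows "0 \<in> affine hull (set_mset F \<union> set_mset G)"
proof -
  define T where "T = set_mset F \<union> set_mset G"
  have T: "finite T" "set_mset F \<subseteq> T" "set_mset G \<subseteq> T"
    by (auto simp: T_def)
  define d where "d = real (size F) - real (size G)"
  define u where "u a = (real (count F a) - real (count G a)) / d" for a
  have "d \<noteq> 0"
    using size by (simp add: d_def)
  have "sum u T = d / d"
    using size_eq_sum_count[OF T(1,2)] size_eq_sum_count[OF T(1,3)]
    by (simp add: u_def d_def sum_subtractf flip: sum_divide_distrib)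
  moreover have "(\<Sum>a\<in>T. u a *\<^sub>R a) =
      (1 / d) *\<^sub>R (\<Sum>a\<in>T. real (count F a) *\<^sub>R a - real (count G a) *\<^sub>R a)"
    unfolding scaleR_sum_right
    by (intro sum.cong) (simp_all add: u_def algebra_simps divide_inverse)
  then have "(\<Sum>a\<in>T. u a *\<^sub>R a) = (1 / d) *\<^sub>R (sum_mset F - sum_mset G)"
    by (simp add: sum_subtractf sum_mset_eq_sum_count[OF T(1,2)] sum_mset_eq_sum_count[OF T(1,3)])
  ultimately have "sum u T = 1" "(\<Sum>a\<in>T. u a *\<^sub>R a) = 0"
    using sum \<open>d \<noteq> 0\<close> by simp_all
  then show ?thesis
    unfolding T_def[symmetric] using T(1) by (auto simp: affine_hull_finite)
qed

lemma HFM_if_zero_notin_affine_hull_atoms: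
  fixes M :: "(nat ^ 'n) set"
  assumes "submonoid M" and "0 \<notin> affine hull (emb ` atoms M)"
  shows "HFM M"
proof -
  have "size F = size G" if "factorization M x F" "factorization M x G" for x F G
  proof (rule ccontr)
    assume "size F \<noteq> size G"
    moreover have "sum_mset (image_mset emb F) = sum_mset (image_mset emb G)"
      using that by (simp add: factorization_def flip: emb_sum_mset)
    ultimately have "0 \<in> affine hull (set_mset (image_mset emb F) \<union> set_mset (image_mset emb G))"
      by (intro zero_in_affine_hull_if_sum_mset_eq) simp_all
    moreover have "set_mset (image_mset emb F) \<union> set_mset (image_mset emb G) \<subseteq> emb ` atoms M"
      using that by (auto simp: factorization_def)
    then have "affine hull (set_mset (image_mset emb F) \<union> set_mset (image_mset emb G)) \<subseteq>
        affine hull (emb ` atoms M)"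
      by (rule hull_mono)
    ultimately show False
      using assms(2) by blast
  qed
  then show ?thesis
    unfolding HFM_def using ex_factorization[OF assms(1)] by blast
qed

lemma ex_rat_linear_functional:
  "\<exists>\<phi> :: real \<Rightarrow> rat. Modules.additive \<phi> \<and> (\<forall>q x. \<phi> (of_rat q * x) = q * \<phi> x) \<and> \<phi> 1 = 1"
proof -
  interpret Q: vector_space "\<lambda>q x. of_rat q * (x::real)"
    by unfold_locales (auto simp: algebra_simps of_rat_add of_rat_mult)
  \<comment> \<open>the coordinate at 1 with respect to a Hamel basis of \<open>\<real>\<close> over \<open>\<rat>\<close> containing 1\<close>
  define B where "B = Q.extend_basis {1}"
  have one_indep: "Q.independent {1::real}"
    by (rule Q.independent_insertI) (auto simp: Q.independent_empty)
  have indep: "Q.independent B" and spans: "Q.span B = UNIV" and one: "1 \<in> B"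
    using Q.independent_extend_basis[OF one_indep] Q.span_extend_basis[OF one_indep]
      Q.extend_basis_superset[OF one_indep]
    by (auto simp: B_def)
  define \<phi> where "\<phi> x = Q.representation B x 1" for x
  have "Modules.additive \<phi>"
    by unfold_locales (simp add: \<phi>_def Q.representation_add[OF indep] spans)
  moreover have "\<phi> (of_rat q * x) = q * \<phi> x" for q x
    by (simp add: \<phi>_def Q.representation_scale[OF indep] spans)
  moreover have "\<phi> 1 = 1"
    by (simp add: \<phi>_def Q.representation_basis[OF indep one])
  ultimately show ?thesis by blast
qed

lemma ex_common_denominator:
  fixes r :: "'a \<Rightarrow> rat"
  assumes "finite T"
  shows "\<exists>D::int. D > 0 \<and> (\<forall>a\<in>T. of_int D * r a \<in> \<int>)"
  using assms
proof (induction T rule: finite_induct)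
  case empty
  show ?case by (intro exI[of _ 1]) simp
next
  case (insert b T)
  then obtain D where D: "D > 0" "\<forall>a\<in>T. of_int D * r a \<in> \<int>" by blast
  obtain n d where "quotient_of (r b) = (n, d)" by fastforce
  then have "d > 0" and rb: "r b = of_int n / of_int d"
    by (simp_all add: quotient_of_denom_pos quotient_of_div)
  have "of_int (D * d) * r a \<in> \<int>" if "a \<in> insert b T" for a
  proof (cases "a = b")
    case True
    then show ?thesis using \<open>d > 0\<close> rb by (simp add: field_simps)
  next
    case False
    then have "of_int (D * d) * r a = of_int d * (of_int D * r a)" by simp
    with False that D(2) show ?thesis by (metis Ints_mult Ints_of_int insertE)
  qed
  with D(1) \<open>d > 0\<close> show ?case by (intro exI[of _ "D * d"]) simp
qed

lemma ex_rational_affine_relation: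
  fixes T :: "(nat ^ 'n) set" and c :: "nat ^ 'n \<Rightarrow> real"
  assumes "sum c T = 1" and "(\<Sum>a\<in>T. c a *\<^sub>R emb a) = 0"
  shows "\<exists>r :: nat ^ 'n \<Rightarrow> rat. sum r T = 1 \<and> (\<forall>j. (\<Sum>a\<in>T. of_nat (a $ j) * r a) = 0)"
proof -
  obtain \<phi> :: "real \<Rightarrow> rat" where add: "Modules.additive \<phi>"
    and hom: "\<And>q x. \<phi> (of_rat q * x) = q * \<phi> x" and one: "\<phi> 1 = 1"
    using ex_rat_linear_functional by blast
  have hom_nat: "\<phi> (real k * x) = of_nat k * \<phi> x" for k x
    using hom[of "of_nat k" x] by simp
  have "(\<Sum>a\<in>T. of_nat (a $ j) * \<phi> (c a)) = 0" for j
  proof -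
    have "(\<Sum>a\<in>T. real (a $ j) * c a) = 0"
      using arg_cong[OF assms(2), of "\<lambda>v. v $ j"] by (simp add: emb_def mult.commute)
    then have "\<phi> (\<Sum>a\<in>T. real (a $ j) * c a) = 0"
      using additive.zero[OF add] by simp
    then show ?thesis by (simp add: additive.sum[OF add] hom_nat)
  qed
  moreover have "(\<Sum>a\<in>T. \<phi> (c a)) = 1"
    using assms(1) one by (simp flip: additive.sum[OF add])
  ultimately show ?thesis by blast
qed

lemma ex_integer_affine_relation:
  fixes T :: "(nat ^ 'n) set" and r :: "nat ^ 'n \<Rightarrow> rat"
  assumes "finite T" and "sum r T = 1" and "\<forall>j. (\<Sum>a\<in>T. of_nat (a $ j) * r a) = 0"
  shows "\<exists>e :: nat ^ 'n \<Rightarrow> int. sum e T > 0 \<and> (\<forall>j. (\<Sum>a\<in>T. e a * int (a $ j)) = 0)"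
proof -
  obtain D :: int where "D > 0" and "\<forall>a\<in>T. of_int D * r a \<in> \<int>"
    using ex_common_denominator[OF assms(1)] by blast
  then have "\<forall>a\<in>T. \<exists>k. of_int D * r a = of_int k"
    by (auto elim!: Ints_cases)
  then obtain e where e: "\<And>a. a \<in> T \<Longrightarrow> of_int (e a) = of_int D * r a"
    by (metis bchoice)
  have "(of_int (sum e T) :: rat) = of_int D"
    using assms(2) by (simp add: of_int_sum e flip: sum_distrib_left)
  then have "sum e T = D"
    by (rule of_int_eq_iff[THEN iffD1])
  moreover have "(\<Sum>a\<in>T. e a * int (a $ j)) = 0" for j
  proof -
    have "(of_int (\<Sum>a\<in>T. e a * int (a $ j)) :: rat) = of_int D * (\<Sum>a\<in>T. of_nat (a $ j) * r a)"
      by (simp add: of_int_sum sum_distrib_left e mult_ac)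
    then show ?thesis
      by (simp only: assms(3)[rule_format] mult_zero_right of_int_eq_0_iff)
  qed
  ultimately show ?thesis
    using \<open>D > 0\<close> by auto
qed

lemma ex_multisets_of_integer_relation:
  fixes T :: "(nat ^ 'n) set" and e :: "nat ^ 'n \<Rightarrow> int"
  assumes "finite T" and "\<forall>j. (\<Sum>a\<in>T. e a * int (a $ j)) = 0"
  shows "\<exists>F G. set_mset F \<subseteq> T \<and> set_mset G \<subseteq> T \<and> sum_mset F = sum_mset G \<and>
           int (size F) - int (size G) = sum e T"
proof -
  define F where "F = (\<Sum>a\<in>T. replicate_mset (nat (e a)) a)"
  define G where "G = (\<Sum>a\<in>T. replicate_mset (nat (- e a)) a)"
  have "set_mset F \<subseteq> T" "set_mset G \<subseteq> T"
    using assms(1) by (auto simp: F_def G_def set_mset_sum)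
  moreover have "sum_mset F = sum_mset G"
  proof (rule vec_eq_iff[THEN iffD2], rule allI)
    fix j
    have "int (sum_mset F $ j) - int (sum_mset G $ j) = (\<Sum>a\<in>T. e a * int (a $ j))"
      by (simp add: F_def G_def sum_mset_sum of_nat_index of_nat_sum
          flip: sum_subtractf left_diff_distrib)
         (intro sum.cong; simp)
    then show "sum_mset F $ j = sum_mset G $ j"
      using assms(2) by simp
  qed
  moreover have "int (size F) - int (size G) = sum e T"
    by (simp add: F_def G_def of_nat_sum flip: sum_subtractf) (intro sum.cong; simp)
  ultimately show ?thesis by blast
qed

lemma unequal_factorizations_if_zero_in_affine_hull:
  fixes A :: "(nat ^ 'n) set"
  assumes "0 \<in> affine hull (emb ` A)"
  shows "\<exists>F G. set_mset F \<subseteq> A \<and> set_mset G \<subseteq> A \<and> sum_mset F = sum_mset G \<and> size G < size F"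
proof -
  obtain S u where S: "finite S" "S \<subseteq> emb ` A" "sum u S = 1" "(\<Sum>v\<in>S. u v *\<^sub>R v) = 0"
    using assms unfolding affine_hull_explicit by blast
  then obtain T where T: "T \<subseteq> A" "finite T" "S = emb ` T"
    by (meson finite_subset_image)
  have inj: "inj_on emb T"
    using inj_emb by (rule inj_on_subset) simp
  have real_rel: "sum (u \<circ> emb) T = 1" "(\<Sum>a\<in>T. (u \<circ> emb) a *\<^sub>R emb a) = 0"
    using S(3,4) by (simp_all add: T(3) sum.reindex[OF inj])
  obtain r :: "nat ^ 'n \<Rightarrow> rat" where "sum r T = 1" "\<forall>j. (\<Sum>a\<in>T. of_nat (a $ j) * r a) = 0"
    using ex_rational_affine_relation[OF real_rel] by blast
  then obtain e where e: "sum e T > 0" "\<forall>j. (\<Sum>a\<in>T. e a * int (a $ j)) = 0"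
    using ex_integer_affine_relation[OF T(2)] by blast
  obtain F G where FG: "set_mset F \<subseteq> T" "set_mset G \<subseteq> T" "sum_mset F = sum_mset G"
    "int (size F) - int (size G) = sum e T"
    using ex_multisets_of_integer_relation[OF T(2) e(2)] by blast
  have "size G < size F"
    using FG(4) e(1) by linarith
  then show ?thesis
    using FG(1-3) T(1) by blast
qed

lemma zero_notin_affine_hull_atoms_if_HFM:
  fixes M :: "(nat ^ 'n) set"
  assumes "submonoid M" and "HFM M"
  shows "0 \<notin> affine hull (emb ` atoms M)"
proof
  assume "0 \<in> affine hull (emb ` atoms M)"
  then obtain F G where FG: "set_mset F \<subseteq> atoms M" "set_mset G \<subseteq> atoms M"
    "sum_mset F = sum_mset G" "size G < size F"
    using unequal_factorizations_if_zero_in_affine_hull by blast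
  then have factF: "factorization M (sum_mset F) F" and factG: "factorization M (sum_mset F) G"
    by (simp_all add: factorization_def)
  have "sum_mset F \<in> M"
    using FG(1) atoms_subset by (intro sum_mset_in_submonoid[OF assms(1)]) blast
  moreover have "sum_mset F \<noteq> 0"
  proof -
    have "F \<noteq> {#}"
      using FG(4) by auto
    then obtain a where "a \<in># F"
      by (rule multiset_nonemptyE)
    moreover have "a \<noteq> 0"
      using FG(1) \<open>a \<in># F\<close> by (auto simp: atoms_def)
    ultimately show ?thesis
      by (auto simp only: sum_mset_vec_nat_eq_0_iff)
  qed
  ultimately have "size F = size G"
    using HFM_size_eq[OF assms(2) _ _ factF factG] by blast
  with FG(4) show False by simp
qed

lemma HFM_iff_zero_notin_affine_hull_atoms:
  fixes M :: "(nat ^ 'n) set"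
  assumes "submonoid M"
  shows "HFM M \<longleftrightarrow> 0 \<notin> affine hull (emb ` atoms M)"
  using HFM_if_zero_notin_affine_hull_atoms zero_notin_affine_hull_atoms_if_HFM assms by blast

section \<open>Dimension of the cone\<close>

lemma zero_in_cone_of: "0 \<in> cone_of S"
  unfolding cone_of_def by (intro CollectI exI[of _ "{}"]) simp

lemma subset_cone_of: "S \<subseteq> cone_of S"
proof
  fix x assume "x \<in> S"
  then show "x \<in> cone_of S"
    unfolding cone_of_def by (intro CollectI exI[of _ "{x}"] exI[of _ "\<lambda>_. 1"]) simp
qed

lemma cone_of_scaleR:
  assumes "c \<ge> 0" and "y \<in> cone_of S"
  shows "c *\<^sub>R y \<in> cone_of S"
proof -
  obtain T d where "finite T" "T \<subseteq> S" "\<forall>x\<in>T. d x \<ge> 0" "y = (\<Sum>x\<in>T. d x *\<^sub>R x)"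
    using assms(2) unfolding cone_of_def by blast
  then show ?thesis
    unfolding cone_of_def using assms(1)
    by (intro CollectI exI[of _ T] exI[of _ "\<lambda>x. c * d x"]) (simp add: scaleR_sum_right)
qed

lemma cone_of_add:
  assumes "y \<in> cone_of S" and "z \<in> cone_of S"
  shows "y + z \<in> cone_of S"
proof -
  obtain T1 d1 where T1: "finite T1" "T1 \<subseteq> S" "\<forall>x\<in>T1. d1 x \<ge> 0" "y = (\<Sum>x\<in>T1. d1 x *\<^sub>R x)"
    using assms(1) unfolding cone_of_def by blast
  obtain T2 d2 where T2: "finite T2" "T2 \<subseteq> S" "\<forall>x\<in>T2. d2 x \<ge> 0" "z = (\<Sum>x\<in>T2. d2 x *\<^sub>R x)"
    using assms(2) unfolding cone_of_def by blast
  define d where "d x = (if x \<in> T1 then d1 x else 0) + (if x \<in> T2 then d2 x else 0)" for x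
  have "(\<Sum>x\<in>T1 \<union> T2. d x *\<^sub>R x) =
      (\<Sum>x\<in>T1 \<union> T2. if x \<in> T1 then d1 x *\<^sub>R x else 0) + (\<Sum>x\<in>T1 \<union> T2. if x \<in> T2 then d2 x *\<^sub>R x else 0)"
    unfolding sum.distrib[symmetric] by (intro sum.cong) (simp_all add: d_def scaleR_add_left)
  also have "\<dots> = y + z"
    using T1(4) T2(4) by (simp only: sum.inter_restrict[OF finite_UnI[OF T1(1) T2(1)], symmetric])
      (simp add: Int_absorb1)
  finally have "y + z = (\<Sum>x\<in>T1 \<union> T2. d x *\<^sub>R x)" ..
  moreover have "\<forall>x\<in>T1 \<union> T2. d x \<ge> 0"
    using T1(3) T2(3) by (simp add: d_def)
  ultimately show ?thesis
    unfolding cone_of_def using T1(1,2) T2(1,2)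
    by (intro CollectI exI[of _ "T1 \<union> T2"] exI[of _ d] conjI) simp_all
qed

lemma
  shows convex_cone_of: "convex (cone_of S)" and cone_cone_of: "cone (cone_of S)"
  using convex_cone[of "cone_of S"] by (simp_all add: cone_of_add cone_of_scaleR)

lemma cone_of_subset_span: "cone_of S \<subseteq> span S"
proof
  fix y assume "y \<in> cone_of S"
  then obtain T d where "T \<subseteq> S" "y = (\<Sum>x\<in>T. d x *\<^sub>R x)"
    unfolding cone_of_def by blast
  then show "y \<in> span S"
    by (simp add: span_sum span_scale span_base subsetD)
qed

lemma aff_dim_insert_0:
  fixes S :: "'a::euclidean_space set"
  shows "aff_dim (insert 0 S) = int (dim S)"
proof -
  have "aff_dim (insert 0 S) = aff_dim (affine hull (insert 0 S))"
    by simp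
  also have "\<dots> = aff_dim (span S)"
    by (simp add: affine_hull_span_0 hull_inc)
  also have "\<dots> = int (dim S)"
    by (simp add: aff_dim_subspace)
  finally show ?thesis .
qed

lemma aff_dim_cone_of:
  fixes S :: "'a::euclidean_space set"
  shows "aff_dim (cone_of S) = int (dim S)"
proof -
  have "insert 0 S \<subseteq> cone_of S"
    by (simp add: zero_in_cone_of subset_cone_of)
  then have "int (dim S) \<le> aff_dim (cone_of S)"
    unfolding aff_dim_insert_0[symmetric] by (rule aff_dim_subset)
  moreover have "aff_dim (cone_of S) \<le> int (dim S)"
    using aff_dim_subset[OF cone_of_subset_span] by (simp add: aff_dim_subspace)
  ultimately show ?thesis by simp
qed

lemma span_emb_atoms:
  fixes M :: "(nat ^ 'n) set"
  assumes "submonoid M"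
  shows "span (emb ` atoms M) = span (emb ` M)"
proof (rule span_eq[THEN iffD2], rule conjI)
  show "emb ` atoms M \<subseteq> span (emb ` M)"
    using atoms_subset by (auto intro: span_base)
  show "emb ` M \<subseteq> span (emb ` atoms M)"
  proof
    fix v assume "v \<in> emb ` M"
    then obtain x where "x \<in> M" "v = emb x"
      by blast
    then obtain F where "v = emb (sum_mset F)" "set_mset F \<subseteq> atoms M"
      using ex_factorization[OF assms] unfolding factorization_def by blast
    moreover have "set_mset (image_mset emb F) \<subseteq> span (emb ` atoms M)"
      using calculation(2) by (auto intro: span_base)
    ultimately show "v \<in> span (emb ` atoms M)"
      by (simp add: emb_sum_mset sum_mset_in_span)
  qed
qed

lemma HFM_iff_aff_dim_less:
  fixes M :: "(nat ^ 'n) set"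
  assumes "submonoid M"
  shows "HFM M \<longleftrightarrow> aff_dim (convex hull (emb ` atoms M)) < aff_dim (cone_of (emb ` M))"
proof -
  have "aff_dim (cone_of (emb ` M)) = aff_dim (insert 0 (emb ` atoms M))"
    using span_eq_dim[OF span_emb_atoms[OF assms]] by (simp add: aff_dim_cone_of aff_dim_insert_0)
  then show ?thesis
    by (simp add: HFM_iff_zero_notin_affine_hull_atoms[OF assms] aff_dim_convex_hull aff_dim_insert)
qed

section \<open>Face submonoids\<close>

lemma face_of_cone_add_imp_left:
  fixes F C :: "'a::real_vector set"
  assumes face: "F face_of C" and "cone F" and "cone C"
    and "p \<in> C" and "q \<in> C" and "p + q \<in> F"
  shows "p \<in> F"
proof -
  have "2 *\<^sub>R p \<in> F"
  proof (cases "p = q")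
    case True
    then show ?thesis
      using \<open>p + q \<in> F\<close> by (simp add: scaleR_2)
  next
    case False
    have "2 *\<^sub>R p \<in> C" "2 *\<^sub>R q \<in> C"
      using mem_cone[OF \<open>cone C\<close>] \<open>p \<in> C\<close> \<open>q \<in> C\<close> by simp_all
    moreover have "midpoint (2 *\<^sub>R p) (2 *\<^sub>R q) = p + q"
      by (simp add: midpoint_def flip: scaleR_add_right)
    then have "p + q \<in> open_segment (2 *\<^sub>R p) (2 *\<^sub>R q)"
      using midpoint_in_open_segment[of "2 *\<^sub>R p" "2 *\<^sub>R q"] False by simp
    ultimately show ?thesis
      using face_ofD[OF face] \<open>p + q \<in> F\<close> by blast
  qed
  then have "(1/2 :: real) *\<^sub>R 2 *\<^sub>R p \<in> F"
    by (rule mem_cone[OF \<open>cone F\<close>]) simp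
  then show ?thesis
    by simp
qed

lemma atoms_subset_if_divisor_closed:
  fixes M N :: "'a::comm_monoid_add set"
  assumes "N \<subseteq> M" and closed: "\<And>x y. x \<in> M \<Longrightarrow> y \<in> M \<Longrightarrow> x + y \<in> N \<Longrightarrow> x \<in> N"
  shows "atoms N \<subseteq> atoms M"
proof
  fix a assume a: "a \<in> atoms N"
  have "\<not> (x \<in> M - {0} \<and> y \<in> M - {0} \<and> a = x + y)" for x y
  proof
    assume xy: "x \<in> M - {0} \<and> y \<in> M - {0} \<and> a = x + y"
    then have "x \<in> N" "y \<in> N"
      using closed[of x y] closed[of y x] a atoms_subset[of N] by (auto simp: add.commute)
    then show False
      using xy a unfolding atoms_def by blast
  qed
  then show "a \<in> atoms M"
    using a assms(1) unfolding atoms_def by blast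
qed

lemma HFM_if_divisor_closed_submonoid:
  fixes M N :: "(nat ^ 'n) set"
  assumes "HFM M" and "submonoid N" and "N \<subseteq> M"
    and "\<And>x y. x \<in> M \<Longrightarrow> y \<in> M \<Longrightarrow> x + y \<in> N \<Longrightarrow> x \<in> N"
  shows "HFM N"
proof -
  have "atoms N \<subseteq> atoms M"
    using assms(3,4) by (rule atoms_subset_if_divisor_closed)
  then have factM: "factorization M x F" if "factorization N x F" for x F
    using that by (auto simp: factorization_def)
  have "size F = size G"
    if "x \<in> N - {0}" "factorization N x F" "factorization N x G" for x F G
    using that assms(3) by (intro HFM_size_eq[OF assms(1)] factM) auto
  then show ?thesis
    unfolding HFM_def using ex_factorization[OF assms(2)] by blast
qed

lemma face_submonoid_divisor_closed:
  fixes M N :: "(nat ^ 'n) set"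
  assumes "submonoid M" and "face_submonoid N M"
  shows "submonoid N" and "N \<subseteq> M"
    and "\<And>x y. x \<in> M \<Longrightarrow> y \<in> M \<Longrightarrow> x + y \<in> N \<Longrightarrow> x \<in> N"
proof -
  obtain F where face: "F face_of cone_of (emb ` M)" and "cone F" "F \<noteq> {}"
    and N: "N = {x \<in> M. emb x \<in> F}"
    using assms(2) unfolding face_submonoid_def cone_face_def by blast
  have "convex F"
    using face by (rule face_of_imp_convex)
  then have F_add: "\<forall>u\<in>F. \<forall>v\<in>F. u + v \<in> F"
    using convex_cone[of F] \<open>cone F\<close> by simp
  have "0 \<in> F"
    using cone_contains_0 \<open>cone F\<close> \<open>F \<noteq> {}\<close> by blast
  show "N \<subseteq> M"
    using N by blast
  show "submonoid N"
    using assms(1) \<open>0 \<in> F\<close> F_add unfolding N submonoid_def by (simp add: emb_add)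
  show "x \<in> N" if "x \<in> M" "y \<in> M" "x + y \<in> N" for x y
  proof -
    have "emb x \<in> cone_of (emb ` M)" "emb y \<in> cone_of (emb ` M)"
      using that(1,2) subset_cone_of[of "emb ` M"] by auto
    moreover have "emb x + emb y \<in> F"
      using that(3) N by (simp add: emb_add)
    ultimately have "emb x \<in> F"
      by (rule face_of_cone_add_imp_left[OF face \<open>cone F\<close> cone_cone_of])
    then show ?thesis
      using that(1) N by simp
  qed
qed

lemma HFM_face_submonoid:
  fixes M N :: "(nat ^ 'n) set"
  assumes "submonoid M" and "HFM M" and "face_submonoid N M"
  shows "HFM N"
  by (rule HFM_if_divisor_closed_submonoid[OF assms(2) face_submonoid_divisor_closed[OF assms(1,3)]])

lemma face_submonoid_self: "face_submonoid M M"
proof -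
  have "cone_face (cone_of (emb ` M)) (cone_of (emb ` M))"
    unfolding cone_face_def using zero_in_cone_of[of "emb ` M"]
    by (auto simp: cone_cone_of face_of_refl convex_cone_of)
  moreover have "M = {x \<in> M. emb x \<in> cone_of (emb ` M)}"
    using subset_cone_of[of "emb ` M"] by auto
  ultimately show ?thesis
    unfolding face_submonoid_def by blast
qed

theorem mainTheorem8:
  fixes M :: "(nat ^ 'n) set"
  assumes "submonoid M" and "M \<noteq> {0}"
  shows "(HFM M \<longleftrightarrow> (\<forall>N. face_submonoid N M \<longrightarrow> HFM N)) \<and>
         (HFM M \<longleftrightarrow> aff_dim (convex hull (emb ` atoms M)) < aff_dim (cone_of (emb ` M)))"
proof (intro conjI iffI allI impI)
  show "HFM N" if "HFM M" and "face_submonoid N M" for N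
    using assms(1) that by (rule HFM_face_submonoid)
  show "HFM M" if "\<forall>N. face_submonoid N M \<longrightarrow> HFM N"
    using that face_submonoid_self by blast
qed (use HFM_iff_aff_dim_less[OF assms(1)] in simp_all)

end
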